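(* Let $I=\{T,L,R\}$ with the discrete metric and consider the initial chain $I\xrightarrow{!}FI\xrightarrow{F!}F^2I\xrightarrow{F^2!}\cdots$ of the functor $F$ on $\mathbf{Met_3}^{C}$, where $!\colon I\to FI$ is the unique morphism ($T\mapsto a\otimes T$, $L\mapsto b\otimes L$, $R\mapsto c\otimes R$). The colimit of this chain in $\mathbf{Met_3}^{C}$ is $G_\rho=(G,d_{disc})$, the colimit $G$ of the same chain in $\mathbf{Set_3}$ equipped with the discrete metric; moreover the colimit maps $F^nI\to G_\rho$ are the same as the colimit maps $F^nI\to G$ in $\mathbf{Set_3}$.
   Context: A tripointed set is a set with three distinct distinguished points $T,L,R$; $\mathbf{Set_3}$ is the category of tripointed sets with maps preserving $T,L,R$. A tripointed metric space is a tripointed set with a metric bounded by $1$ in which the three distinguished points have pairwise distance $1$. $\mathbf{Met_3}^{C}$ is the category of tripointed metric spaces with continuous maps preserving $T,L,R$. Let $M=\{a,b,c\}$. The functor $F=M\otimes-$: for a tripointed set $X$, $M\otimes X$ is the quotient of $M\times X$ (three copies of $X$) by the equivalence relation generated by $(b,T)\sim(a,L)$, $(a,R)\sim(c,T)$, $(c,L)\sim(b,R)$, elements written $m\otimes x$, distinguished points $a\otimes T$, $b\otimes L$, $c\otimes R$; on morphisms $(M\otimes f)(m\otimes x)=m\otimes f(x)$. In the metric setting $M\times X$ carries the metric $d((m,x),(n,y))=\tfrac12 d(x,y)$ if $m=n$ and $1$ otherwise, and $M\otimes X$ carries the quotient metric. The discrete metric is $d(x,y)=1$ for $x\neq y$.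 *)

theory Defs
  imports "HOL-Analysis.Analysis" "HOL-Library.FSet"
begin

datatype M = Ma | Mb | Mc
datatype I = IT | IL | IR

record 'x tmsp =
  car :: "'x set"
  dst :: "'x \<Rightarrow> 'x \<Rightarrow> real"
  pT :: 'x
  pL :: 'x
  pR :: 'x

definition tms3 :: "'x tmsp \<Rightarrow> bool" where
  "tms3 X \<longleftrightarrow> Metric_space (car X) (dst X)
     \<and> pT X \<in> car X \<and> pL X \<in> car X \<and> pR X \<in> car X
     \<and> (\<forall>x\<in>car X. \<forall>y\<in>car X. dst X x y \<le> 1)
     \<and> dst X (pT X) (pL X) = 1 \<and> dst X (pT X) (pR X) = 1 \<and> dst X (pL X) (pR X) = 1"

definition mtop :: "'x tmsp \<Rightarrow> 'x topology" where
  "mtop X = Metric_space.mtopology (car X) (dst X)"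

definition mor3 :: "'x tmsp \<Rightarrow> 'y tmsp \<Rightarrow> ('x \<Rightarrow> 'y) \<Rightarrow> bool" where
  "mor3 X Y f \<longleftrightarrow> continuous_map (mtop X) (mtop Y) f
     \<and> f (pT X) = pT Y \<and> f (pL X) = pL Y \<and> f (pR X) = pR Y"

definition disc :: "'x \<Rightarrow> 'x \<Rightarrow> real" where
  "disc x y = (if x = y then 0 else 1)"

definition tbase :: "'x tmsp \<Rightarrow> ((M \<times> 'x) \<times> (M \<times> 'x)) set" where
  "tbase X = {((Mb, pT X), (Ma, pL X)), ((Ma, pR X), (Mc, pT X)), ((Mc, pL X), (Mb, pR X))}"

definition ten_eq :: "'x tmsp \<Rightarrow> ((M \<times> 'x) \<times> (M \<times> 'x)) set" where
  "ten_eq X = {(p, q). p \<in> UNIV \<times> car X \<and> q \<in> UNIV \<times> car X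
                 \<and> (p, q) \<in> (tbase X \<union> (tbase X)\<inverse>)\<^sup>*}"

definition pmet :: "'x tmsp \<Rightarrow> M \<times> 'x \<Rightarrow> M \<times> 'x \<Rightarrow> real" where
  "pmet X p q = (if fst p = fst q then dst X (snd p) (snd q) / 2 else 1)"

definition qdist :: "'x tmsp \<Rightarrow> (M \<times> 'x) set \<Rightarrow> (M \<times> 'x) set \<Rightarrow> real" where
  "qdist X P Q =
     (if P \<in> (UNIV \<times> car X) // ten_eq X \<and> Q \<in> (UNIV \<times> car X) // ten_eq X then
        Inf {(\<Sum>i\<le>k. pmet X (p i) (q i)) | k p q.
               p 0 \<in> P \<and> q k \<in> Q
               \<and> (\<forall>i\<le>k. p i \<in> UNIV \<times> car X \<and> q i \<in> UNIV \<times> car X)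
               \<and> (\<forall>i<k. (q i, p (Suc i)) \<in> ten_eq X)}
      else 0)"

definition Ften :: "'x tmsp \<Rightarrow> (M \<times> 'x) set tmsp" where
  "Ften X = \<lparr> car = (UNIV \<times> car X) // ten_eq X,
              dst = qdist X,
              pT = ten_eq X `` {(Ma, pT X)},
              pL = ten_eq X `` {(Mb, pL X)},
              pR = ten_eq X `` {(Mc, pR X)} \<rparr>"

definition Fmor :: "'y tmsp \<Rightarrow> ('x \<Rightarrow> 'y) \<Rightarrow> (M \<times> 'x) set \<Rightarrow> (M \<times> 'y) set" where
  "Fmor Y f C = ten_eq Y `` ((\<lambda>(m, x). (m, f x)) ` C)"

text \<open>A universe closed under the construction: every class of M \<otimes> X (a finite set) is
  re-encoded injectively as a node.\<close>
datatype V = Pt I | Cls "(M \<times> V) fset"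

definition enc :: "(M \<times> V) set \<Rightarrow> V" where
  "enc C = Cls (Abs_fset C)"

fun dec :: "V \<Rightarrow> (M \<times> V) set" where
  "dec (Cls s) = fset s"
| "dec (Pt i) = {}"

text \<open>Isomorphic copy of M \<otimes> X inside V (enc is injective on finite classes).\<close>
definition encS :: "(M \<times> V) set tmsp \<Rightarrow> V tmsp" where
  "encS X = \<lparr> car = enc ` car X,
              dst = (\<lambda>u v. dst X (dec u) (dec v)),
              pT = enc (pT X), pL = enc (pL X), pR = enc (pR X) \<rparr>"

definition I0 :: "V tmsp" where
  "I0 = \<lparr> car = {Pt IT, Pt IL, Pt IR}, dst = disc, pT = Pt IT, pL = Pt IL, pR = Pt IR \<rparr>"

primrec chain_obj :: "nat \<Rightarrow> V tmsp" where
  "chain_obj 0 = I0"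
| "chain_obj (Suc n) = encS (Ften (chain_obj n))"

definition bang :: "V \<Rightarrow> V" where
  "bang v = (if v = Pt IT then pT (chain_obj 1)
             else if v = Pt IL then pL (chain_obj 1) else pR (chain_obj 1))"

primrec chain_map :: "nat \<Rightarrow> V \<Rightarrow> V" where
  "chain_map 0 = bang"
| "chain_map (Suc n) = (\<lambda>v. enc (Fmor (chain_obj (Suc n)) (chain_map n) (dec v)))"

primrec citer :: "nat \<Rightarrow> nat \<Rightarrow> V \<Rightarrow> V" where
  "citer n 0 x = x"
| "citer n (Suc k) x = chain_map (n + k) (citer n k x)"

definition Sig :: "(nat \<times> V) set" where
  "Sig = {(n, x). x \<in> car (chain_obj n)}"

definition ceq :: "((nat \<times> V) \<times> (nat \<times> V)) set" where
  "ceq = {((n, x), (m, y)). (n, x) \<in> Sig \<and> (m, y) \<in> Sig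
            \<and> (\<exists>k. n \<le> k \<and> m \<le> k \<and> citer n (k - n) x = citer m (k - m) y)}"

definition Gset :: "(nat \<times> V) set set" where
  "Gset = Sig // ceq"

definition gmap :: "nat \<Rightarrow> V \<Rightarrow> (nat \<times> V) set" where
  "gmap n x = ceq `` {(n, x)}"

definition G_rho :: "(nat \<times> V) set tmsp" where
  "G_rho = \<lparr> car = Gset, dst = disc,
             pT = gmap 0 (Pt IT), pL = gmap 0 (Pt IL), pR = gmap 0 (Pt IR) \<rparr>"

end

theory Submission
  imports Defs
begin

(* Each F^n I is finite, and distinct points of F^n I are at distance at least 2^-n: a chain
   through the three copies of F^(n-1) I joining two different classes must contain a step between
   distinct points, which costs at least half the previous bound inside a copy and 1 across copies.
   So every F^n I is a uniformly discrete metric space and carries the discrete topology, and so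
   does (G, d_disc). Every map out of a discrete space is continuous, hence cocones over the chain
   in Met_3^C are exactly the cocones in Set_3 whose vertex is a tripointed metric space, and the
   set-theoretic colimit G with the discrete metric inherits the universal property. *)

section \<open>The tensor product on tripointed sets\<close>

definition set3 :: "'x tmsp \<Rightarrow> bool" where
  "set3 X \<longleftrightarrow> pT X \<in> car X \<and> pL X \<in> car X \<and> pR X \<in> car X
     \<and> pT X \<noteq> pL X \<and> pT X \<noteq> pR X \<and> pL X \<noteq> pR X"

definition set3_map :: "'x tmsp \<Rightarrow> 'y tmsp \<Rightarrow> ('x \<Rightarrow> 'y) \<Rightarrow> bool" where
  "set3_map X Y f \<longleftrightarrow> f ` car X \<subseteq> car Y
     \<and> f (pT X) = pT Y \<and> f (pL X) = pL Y \<and> f (pR X) = pR Y"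

lemma UNIV_M: "(UNIV :: M set) = {Ma, Mb, Mc}"
  using M.exhaust by auto

lemma ten_eq_equiv: "equiv (UNIV \<times> car X) (ten_eq X)"
proof -
  have "sym ((tbase X \<union> (tbase X)\<inverse>)\<^sup>*)"
    by (rule sym_rtrancl) (auto simp: sym_def)
  then show ?thesis
    unfolding equiv_def refl_on_def sym_def trans_def ten_eq_def
    by (auto simp: sym_def intro: rtrancl_trans)
qed

lemma ten_eq_class_subset: "C \<in> (UNIV \<times> car X) // ten_eq X \<Longrightarrow> C \<subseteq> UNIV \<times> car X"
  using ten_eq_equiv by (rule in_quotient_imp_subset)

lemma finite_ten_eq_class:
  "finite (car X) \<Longrightarrow> C \<in> (UNIV \<times> car X) // ten_eq X \<Longrightarrow> finite C"
  by (rule finite_subset[OF ten_eq_class_subset]) (auto simp: UNIV_M)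

lemma finite_car_Ften: "finite (car X) \<Longrightarrow> finite (car (Ften X))"
  by (auto simp: Ften_def UNIV_M ten_eq_def intro: finite_quotient)

lemma ten_eq_class_in_car_Ften: "x \<in> car X \<Longrightarrow> ten_eq X `` {(m, x)} \<in> car (Ften X)"
  by (auto simp: Ften_def intro: quotientI)

lemma car_Ften_memE:
  assumes "C \<in> car (Ften X)" obtains a where "a \<in> C" "a \<in> UNIV \<times> car X"
proof -
  obtain x where "x \<in> UNIV \<times> car X" "C = ten_eq X `` {x}"
    using assms by (auto simp: Ften_def elim!: quotientE)
  then show thesis using that equiv_class_self[OF ten_eq_equiv] by blast
qed

lemma car_Ften_eq_iff:
  "C \<in> car (Ften X) \<Longrightarrow> D \<in> car (Ften X) \<Longrightarrow> a \<in> C \<Longrightarrow> b \<in> D \<Longrightarrow> C = D \<longleftrightarrow> (a, b) \<in> ten_eq X"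
  unfolding Ften_def by (simp add: quotient_eq_iff[OF ten_eq_equiv])

lemma ten_eq_class_pts:
  assumes "set3 X"
  shows "ten_eq X `` {(Ma, pT X)} = {(Ma, pT X)}"
    and "ten_eq X `` {(Mb, pL X)} = {(Mb, pL X)}"
    and "ten_eq X `` {(Mc, pR X)} = {(Mc, pR X)}"
proof -
  have isolated: "ten_eq X `` {a} = {a}"
    if "a \<in> UNIV \<times> car X" "\<And>b. (a, b) \<notin> tbase X \<union> (tbase X)\<inverse>" for a
    using that by (auto simp: ten_eq_def elim: converse_rtranclE)
  show "ten_eq X `` {(Ma, pT X)} = {(Ma, pT X)}"
    and "ten_eq X `` {(Mb, pL X)} = {(Mb, pL X)}"
    and "ten_eq X `` {(Mc, pR X)} = {(Mc, pR X)}"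
    using assms by (auto intro!: isolated simp: set3_def tbase_def)
qed

lemma set3_Ften:
  assumes "set3 X" shows "set3 (Ften X)"
proof -
  have "pT (Ften X) \<in> car (Ften X)" "pL (Ften X) \<in> car (Ften X)" "pR (Ften X) \<in> car (Ften X)"
    using assms ten_eq_class_in_car_Ften[of _ X] by (simp_all add: set3_def Ften_def)
  moreover have "pT (Ften X) \<noteq> pL (Ften X)" "pT (Ften X) \<noteq> pR (Ften X)" "pL (Ften X) \<noteq> pR (Ften X)"
    using ten_eq_class_pts[OF assms] by (simp_all add: Ften_def)
  ultimately show ?thesis by (simp add: set3_def)
qed

lemma ten_eq_map:
  assumes f: "set3_map X Y f" and pq: "(p, q) \<in> ten_eq X"
  shows "(apsnd f p, apsnd f q) \<in> ten_eq Y"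
proof -
  have glue: "(apsnd f a, apsnd f b) \<in> tbase Y \<union> (tbase Y)\<inverse>"
    if "(a, b) \<in> tbase X \<union> (tbase X)\<inverse>" for a b
    using that f by (auto simp: tbase_def set3_map_def)
  have "(p, q) \<in> (tbase X \<union> (tbase X)\<inverse>)\<^sup>*" using pq by (simp add: ten_eq_def)
  then have "(apsnd f p, apsnd f q) \<in> (tbase Y \<union> (tbase Y)\<inverse>)\<^sup>*"
  proof (induction rule: rtrancl_induct)
    case (step b c)
    then show ?case using glue by (meson rtrancl.rtrancl_into_rtrancl)
  qed simp
  moreover have "apsnd f p \<in> UNIV \<times> car Y" "apsnd f q \<in> UNIV \<times> car Y"
    using pq f by (auto simp: ten_eq_def set3_map_def apsnd_def map_prod_def split: prod.splits)
  ultimately show ?thesis by (simp add: ten_eq_def)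
qed

lemma Fmor_class:
  assumes f: "set3_map X Y f" and a: "a \<in> UNIV \<times> car X"
  shows "Fmor Y f (ten_eq X `` {a}) = ten_eq Y `` {apsnd f a}"
proof -
  have "Fmor Y f C = ten_eq Y `` (apsnd f ` C)" for C
    unfolding Fmor_def by (intro arg_cong[where f = "Image (ten_eq Y)"] image_cong) auto
  moreover have "a \<in> ten_eq X `` {a}" using a ten_eq_equiv[of X] by (auto simp: equiv_def refl_on_def)
  moreover have "(apsnd f a, z) \<in> ten_eq Y" if "(a, b) \<in> ten_eq X" "(apsnd f b, z) \<in> ten_eq Y" for b z
    using ten_eq_map[OF f that(1)] that(2) ten_eq_equiv[of Y] by (meson equivE transD)
  ultimately show ?thesis by blast
qed

lemma set3_map_Fmor:
  assumes f: "set3_map X Y f" and X: "set3 X"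
  shows "set3_map (Ften X) (Ften Y) (Fmor Y f)"
proof -
  have "Fmor Y f C \<in> car (Ften Y)" if "C \<in> car (Ften X)" for C
  proof -
    obtain m x where "x \<in> car X" "C = ten_eq X `` {(m, x)}"
      using \<open>C \<in> car (Ften X)\<close> by (auto simp: Ften_def elim!: quotientE)
    then show ?thesis
      using f ten_eq_class_in_car_Ften[of "f x" Y m] by (auto simp: Fmor_class set3_map_def)
  qed
  then have "Fmor Y f ` car (Ften X) \<subseteq> car (Ften Y)" by blast
  moreover have "pT X \<in> car X" "pL X \<in> car X" "pR X \<in> car X" using X by (auto simp: set3_def)
  ultimately show ?thesis
    using f by (simp add: set3_map_def Ften_def Fmor_class[OF f])
qed

lemma dec_enc: "finite C \<Longrightarrow> dec (enc C) = C"
  by (simp add: enc_def Abs_fset_inverse)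

lemma encS_car:
  assumes "\<forall>C\<in>car A. finite C" and "u \<in> car (encS A)"
  shows "dec u \<in> car A" and "enc (dec u) = u"
  using assms by (auto simp: encS_def dec_enc)

lemma set3_encS:
  assumes fin: "\<forall>C\<in>car A. finite C" and A: "set3 A"
  shows "set3 (encS A)"
proof -
  have "inj_on enc (car A)" using fin by (metis inj_onI dec_enc)
  then show ?thesis using A by (auto simp: set3_def encS_def inj_on_eq_iff)
qed

lemma set3_map_encS:
  assumes fin: "\<forall>C\<in>car A. finite C" and A: "set3 A" and g: "set3_map A B g"
  shows "set3_map (encS A) (encS B) (\<lambda>v. enc (g (dec v)))"
  using A g fin by (auto simp: set3_map_def set3_def encS_def dec_enc)

section \<open>The quotient metric on \<open>M \<otimes> X\<close>\<close>

definition uniformly_discrete :: "'a set \<Rightarrow> ('a \<Rightarrow> 'a \<Rightarrow> real) \<Rightarrow> real \<Rightarrow> bool" where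
  "uniformly_discrete M d c \<longleftrightarrow> (\<forall>x\<in>M. \<forall>y\<in>M. x \<noteq> y \<longrightarrow> c \<le> d x y)"

lemma Metric_space_disc: "Metric_space M disc"
  by unfold_locales (auto simp: disc_def)

lemma mtopology_uniformly_discrete:
  assumes ms: "Metric_space M d" and c: "0 < c" and ud: "uniformly_discrete M d c"
  shows "Metric_space.mtopology M d = discrete_topology M"
proof -
  have "Metric_space.mball M d x c = {x}" if "x \<in> M" for x
    using that ud ms by (force simp: Metric_space.mball_def uniformly_discrete_def Metric_space.mdist_zero c)
  then have "openin (Metric_space.mtopology M d) {x}" if "x \<in> M" for x
    using Metric_space.openin_mball[OF ms, of x c] that by simp
  then show ?thesis
    by (subst eq_commute) (simp add: discrete_topology_unique Metric_space.topspace_mtopology[OF ms])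
qed

lemma cInf_le_cInf_add:
  fixes A B C :: "real set"
  assumes "A \<noteq> {}" "B \<noteq> {}" "bdd_below C" "\<And>a b. a \<in> A \<Longrightarrow> b \<in> B \<Longrightarrow> a + b \<in> C"
  shows "Inf C \<le> Inf A + Inf B"
proof -
  have "Inf C - b \<le> Inf A" if "b \<in> B" for b
    using assms that by (intro cInf_greatest) (auto simp: algebra_simps intro: cInf_lower)
  then have "Inf C - Inf A \<le> Inf B"
    using assms by (intro cInf_greatest) (auto simp: algebra_simps)
  then show ?thesis by simp
qed

lemma sum_atMost_append:
  fixes f g :: "nat \<Rightarrow> 'a :: comm_monoid_add"
  shows "(\<Sum>i\<le>k + Suc l. if i \<le> k then f i else g (i - Suc k)) = (\<Sum>i\<le>k. f i) + (\<Sum>i\<le>l. g i)"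
proof -
  let ?h = "\<lambda>i. if i \<le> k then f i else g (i - Suc k)"
  have "(\<Sum>i = Suc k..k + Suc l. ?h i) = (\<Sum>i = 0..l. g i)"
    using sum.shift_bounds_cl_nat_ivl[of "\<lambda>i. g (i - Suc k)" 0 "Suc k" l] by (simp add: add.commute)
  moreover have "(\<Sum>i\<le>k. ?h i) = (\<Sum>i\<le>k. f i)" by simp
  ultimately show ?thesis
    by (simp only: sum_up_index_split atLeast0AtMost)
qed

definition chain_sums :: "'x tmsp \<Rightarrow> (M \<times> 'x) set \<Rightarrow> (M \<times> 'x) set \<Rightarrow> real set" where
  "chain_sums X C D = {(\<Sum>i\<le>k. pmet X (p i) (q i)) | k p q.
     p 0 \<in> C \<and> q k \<in> D
     \<and> (\<forall>i\<le>k. p i \<in> UNIV \<times> car X \<and> q i \<in> UNIV \<times> car X)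
     \<and> (\<forall>i<k. (q i, p (Suc i)) \<in> ten_eq X)}"

lemma dst_Ften:
  "dst (Ften X) C D = (if C \<in> car (Ften X) \<and> D \<in> car (Ften X) then Inf (chain_sums X C D) else 0)"
  by (simp add: Ften_def qdist_def chain_sums_def)

lemma chain_sumsI:
  assumes "p 0 \<in> C" "q k \<in> D" "\<forall>i\<le>k. p i \<in> UNIV \<times> car X \<and> q i \<in> UNIV \<times> car X"
    "\<forall>i<k. (q i, p (Suc i)) \<in> ten_eq X"
  shows "(\<Sum>i\<le>k. pmet X (p i) (q i)) \<in> chain_sums X C D"
  unfolding chain_sums_def using assms by blast

lemma chain_sumsE:
  assumes "s \<in> chain_sums X C D"
  obtains k p q where "s = (\<Sum>i\<le>k. pmet X (p i) (q i))" "p 0 \<in> C" "q k \<in> D"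
    "\<forall>i\<le>k. p i \<in> UNIV \<times> car X \<and> q i \<in> UNIV \<times> car X"
    "\<forall>i<k. (q i, p (Suc i)) \<in> ten_eq X"
  using assms unfolding chain_sums_def by blast

lemma pmet_in_chain_sums:
  "a \<in> C \<Longrightarrow> b \<in> D \<Longrightarrow> a \<in> UNIV \<times> car X \<Longrightarrow> b \<in> UNIV \<times> car X \<Longrightarrow> pmet X a b \<in> chain_sums X C D"
  using chain_sumsI[where p = "\<lambda>_. a" and q = "\<lambda>_. b" and k = 0] by simp

lemma chain_sums_nonempty:
  assumes "C \<in> car (Ften X)" "D \<in> car (Ften X)" shows "chain_sums X C D \<noteq> {}"
  using assms by (elim car_Ften_memE) (blast dest: pmet_in_chain_sums)

lemma pmet_nonneg: "Metric_space (car X) (dst X) \<Longrightarrow> 0 \<le> pmet X p q"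
  by (auto simp: pmet_def Metric_space.nonneg)

lemma pmet_commute: "Metric_space (car X) (dst X) \<Longrightarrow> pmet X p q = pmet X q p"
  by (auto simp: pmet_def Metric_space.commute[of "car X" "dst X"])

lemma chain_sums_nonneg: "Metric_space (car X) (dst X) \<Longrightarrow> s \<in> chain_sums X C D \<Longrightarrow> 0 \<le> s"
  by (erule chain_sumsE) (auto intro: sum_nonneg pmet_nonneg)

lemma bdd_below_chain_sums: "Metric_space (car X) (dst X) \<Longrightarrow> bdd_below (chain_sums X C D)"
  by (rule bdd_belowI[of _ 0]) (rule chain_sums_nonneg)

lemma chain_sums_reverse:
  assumes ms: "Metric_space (car X) (dst X)" and s: "s \<in> chain_sums X C D"
  shows "s \<in> chain_sums X D C"
proof -
  obtain k p q where s: "s = (\<Sum>i\<le>k. pmet X (p i) (q i))" and h: "p 0 \<in> C" "q k \<in> D"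
    "\<forall>i\<le>k. p i \<in> UNIV \<times> car X \<and> q i \<in> UNIV \<times> car X"
    "\<forall>i<k. (q i, p (Suc i)) \<in> ten_eq X" using s by (rule chain_sumsE)
  have "(q (k - Suc i), p (k - i)) \<in> ten_eq X" if "i < k" for i
    using h(4) that by (simp add: Suc_diff_Suc[symmetric])
  then have "(p (k - i), q (k - Suc i)) \<in> ten_eq X" if "i < k" for i
    using that ten_eq_equiv[of X] by (metis equivE symD)
  then have "(\<Sum>i\<le>k. pmet X (q (k - i)) (p (k - i))) \<in> chain_sums X D C"
    using h by (intro chain_sumsI) auto
  moreover have "(\<Sum>i\<le>k. pmet X (q (k - i)) (p (k - i))) = s"
    unfolding s pmet_commute[OF ms, of "q _"]
    by (rule sum.reindex_bij_witness[where i = "\<lambda>i. k - i" and j = "\<lambda>i. k - i"]) auto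
  ultimately show ?thesis by simp
qed

lemma chain_sums_commute: "Metric_space (car X) (dst X) \<Longrightarrow> chain_sums X C D = chain_sums X D C"
  by (auto intro: chain_sums_reverse)

lemma chain_sums_append:
  assumes s1: "s1 \<in> chain_sums X C D" and s2: "s2 \<in> chain_sums X D E" and D: "D \<in> car (Ften X)"
  shows "s1 + s2 \<in> chain_sums X C E"
proof -
  obtain k p q where s1: "s1 = (\<Sum>i\<le>k. pmet X (p i) (q i))" and h: "p 0 \<in> C" "q k \<in> D"
    "\<forall>i\<le>k. p i \<in> UNIV \<times> car X \<and> q i \<in> UNIV \<times> car X"
    "\<forall>i<k. (q i, p (Suc i)) \<in> ten_eq X" using s1 by (rule chain_sumsE)
  obtain l p' q' where s2: "s2 = (\<Sum>i\<le>l. pmet X (p' i) (q' i))" and h': "p' 0 \<in> D" "q' l \<in> E"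
    "\<forall>i\<le>l. p' i \<in> UNIV \<times> car X \<and> q' i \<in> UNIV \<times> car X"
    "\<forall>i<l. (q' i, p' (Suc i)) \<in> ten_eq X" using s2 by (rule chain_sumsE)
  have link: "(q k, p' 0) \<in> ten_eq X"
    using car_Ften_eq_iff[OF D D h(2) h'(1)] by simp
  define P where "P i = (if i \<le> k then p i else p' (i - Suc k))" for i
  define Q where "Q i = (if i \<le> k then q i else q' (i - Suc k))" for i
  have "(Q i, P (Suc i)) \<in> ten_eq X" if "i < k + Suc l" for i
  proof (cases "i \<le> k")
    case True
    then show ?thesis using h(4) link by (cases "i = k") (simp_all add: P_def Q_def)
  next
    case False
    then obtain j where "i = k + Suc j" by (metis add_Suc_right less_imp_Suc_add not_le)
    then show ?thesis using h'(4) that by (simp add: P_def Q_def)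
  qed
  then have "(\<Sum>i\<le>k + Suc l. pmet X (P i) (Q i)) \<in> chain_sums X C E"
    using h h' by (intro chain_sumsI) (auto simp: P_def Q_def)
  moreover have "(\<Sum>i\<le>k + Suc l. pmet X (P i) (Q i)) = s1 + s2"
    unfolding s1 s2 P_def Q_def by (subst sum_atMost_append[symmetric]) (rule sum.cong, auto)
  ultimately show ?thesis by simp
qed

lemma ten_eq_chain:
  assumes "\<forall>i\<le>k. (p i, q i) \<in> ten_eq X" "\<forall>i<k. (q i, p (Suc i)) \<in> ten_eq X"
  shows "(p 0, q k) \<in> ten_eq X"
proof -
  have "(p 0, q j) \<in> ten_eq X" if "j \<le> k" for j
    using that
  proof (induction j)
    case (Suc j)
    then show ?case using assms ten_eq_equiv[of X] by (meson Suc_leD Suc_le_lessD equivE le_refl transD)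
  qed (use assms in simp)
  then show ?thesis by simp
qed

lemma chain_sums_ge:
  assumes ms: "Metric_space (car X) (dst X)" and ud: "uniformly_discrete (car X) (dst X) c"
    and c: "c \<le> 2" and CD: "C \<in> car (Ften X)" "D \<in> car (Ften X)" "C \<noteq> D"
    and s: "s \<in> chain_sums X C D"
  shows "c / 2 \<le> s"
proof -
  obtain k p q where s: "s = (\<Sum>i\<le>k. pmet X (p i) (q i))" and h: "p 0 \<in> C" "q k \<in> D"
    "\<forall>i\<le>k. p i \<in> UNIV \<times> car X \<and> q i \<in> UNIV \<times> car X"
    "\<forall>i<k. (q i, p (Suc i)) \<in> ten_eq X" using s by (rule chain_sumsE)
  have "(p 0, q k) \<notin> ten_eq X"
    using car_Ften_eq_iff[OF CD(1,2) h(1,2)] CD(3) by simp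
  then obtain i where i: "i \<le> k" "(p i, q i) \<notin> ten_eq X"
    using ten_eq_chain[of k p q X] h(4) by blast
  then have "p i \<noteq> q i"
    using h(3) ten_eq_equiv[of X] by (metis equiv_class_eq_iff)
  then have "c / 2 \<le> pmet X (p i) (q i)"
    using h(3) i(1) ud c by (cases "p i"; cases "q i") (auto simp: pmet_def uniformly_discrete_def)
  also have "\<dots> \<le> s"
    unfolding s using i(1) by (intro member_le_sum) (auto intro: pmet_nonneg[OF ms])
  finally show ?thesis .
qed

lemma uniformly_discrete_Ften:
  assumes "Metric_space (car X) (dst X)" "uniformly_discrete (car X) (dst X) c" "c \<le> 2"
  shows "uniformly_discrete (car (Ften X)) (dst (Ften X)) (c / 2)"
  unfolding uniformly_discrete_def
proof (intro ballI impI)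
  fix C D assume CD: "C \<in> car (Ften X)" "D \<in> car (Ften X)" "C \<noteq> D"
  show "c / 2 \<le> dst (Ften X) C D"
    using cInf_greatest[OF chain_sums_nonempty[OF CD(1,2)] chain_sums_ge[OF assms CD]] CD
    by (simp add: dst_Ften)
qed

lemma Metric_space_Ften:
  assumes ms: "Metric_space (car X) (dst X)" and ud: "uniformly_discrete (car X) (dst X) c"
    and c: "0 < c" "c \<le> 2"
  shows "Metric_space (car (Ften X)) (dst (Ften X))"
proof
  fix C D
  show "0 \<le> dst (Ften X) C D"
    unfolding dst_Ften
    using cInf_greatest[OF chain_sums_nonempty chain_sums_nonneg[OF ms], of C X D] by simp
  show "dst (Ften X) C D = dst (Ften X) D C"
    unfolding dst_Ften chain_sums_commute[OF ms, of C] by auto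
next
  fix C D assume C: "C \<in> car (Ften X)" and D: "D \<in> car (Ften X)"
  have "0 \<in> chain_sums X C C"
  proof -
    obtain a where "a \<in> C" "a \<in> UNIV \<times> car X" using C by (rule car_Ften_memE)
    then show ?thesis
      using pmet_in_chain_sums[of a C a C X] ms by (auto simp: pmet_def Metric_space.mdist_zero)
  qed
  then have "dst (Ften X) C C = 0"
    using C by (simp add: dst_Ften cInf_eq_minimum chain_sums_nonneg[OF ms])
  moreover have "dst (Ften X) C D \<noteq> 0" if "C \<noteq> D"
    using uniformly_discrete_Ften[OF ms ud c(2)] C D that c(1) by (fastforce simp: uniformly_discrete_def)
  ultimately show "dst (Ften X) C D = 0 \<longleftrightarrow> C = D" by blast
next
  fix C D E assume C: "C \<in> car (Ften X)" and D: "D \<in> car (Ften X)" and E: "E \<in> car (Ften X)"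
  show "dst (Ften X) C E \<le> dst (Ften X) C D + dst (Ften X) D E"
    using cInf_le_cInf_add[OF chain_sums_nonempty[OF C D] chain_sums_nonempty[OF D E]
        bdd_below_chain_sums[OF ms] chain_sums_append[OF _ _ D]] C D E
    by (simp add: dst_Ften)
qed

lemma Metric_space_encS:
  assumes fin: "\<forall>C\<in>car A. finite C" and ms: "Metric_space (car A) (dst A)"
  shows "Metric_space (car (encS A)) (dst (encS A))"
proof
  fix u v
  show "0 \<le> dst (encS A) u v" "dst (encS A) u v = dst (encS A) v u"
    using ms by (simp_all add: encS_def Metric_space.nonneg Metric_space.commute[of "car A"])
next
  fix u v assume "u \<in> car (encS A)" "v \<in> car (encS A)"
  then show "dst (encS A) u v = 0 \<longleftrightarrow> u = v"
    using encS_car[OF fin] Metric_space.zero[OF ms] by (simp add: encS_def) metis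
next
  fix u v w assume "u \<in> car (encS A)" "v \<in> car (encS A)" "w \<in> car (encS A)"
  then show "dst (encS A) u w \<le> dst (encS A) u v + dst (encS A) v w"
    using encS_car[OF fin] Metric_space.triangle[OF ms] by (simp add: encS_def)
qed

lemma uniformly_discrete_encS:
  assumes "\<forall>C\<in>car A. finite C" "uniformly_discrete (car A) (dst A) c"
  shows "uniformly_discrete (car (encS A)) (dst (encS A)) c"
  unfolding uniformly_discrete_def
proof (intro ballI impI)
  fix u v assume "u \<in> car (encS A)" "v \<in> car (encS A)" "u \<noteq> v"
  then show "c \<le> dst (encS A) u v"
    using encS_car[OF assms(1)] assms(2) unfolding uniformly_discrete_def
    by (simp add: encS_def) metis
qed

section \<open>The initial chain\<close>

lemma finite_car_chain_obj: "finite (car (chain_obj n))"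
  by (induction n) (simp_all add: I0_def encS_def finite_car_Ften)

lemma finite_classes_chain_obj: "\<forall>C\<in>car (Ften (chain_obj n)). finite C"
  using finite_ten_eq_class[OF finite_car_chain_obj] by (simp add: Ften_def)

lemma set3_chain_obj: "set3 (chain_obj n)"
proof (induction n)
  case (Suc n)
  show ?case using set3_encS[OF finite_classes_chain_obj set3_Ften[OF Suc.IH]] by simp
qed (simp add: set3_def I0_def)

lemma set3_map_chain_map: "set3_map (chain_obj n) (chain_obj (Suc n)) (chain_map n)"
proof (induction n)
  case 0
  show ?case using set3_chain_obj[of 1] by (auto simp: set3_map_def set3_def bang_def I0_def)
next
  case (Suc n)
  have "set3_map (encS (Ften (chain_obj n))) (encS (Ften (chain_obj (Suc n))))
      (\<lambda>v. enc (Fmor (chain_obj (Suc n)) (chain_map n) (dec v)))"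
    using Suc.IH set3_chain_obj
    by (intro set3_map_encS set3_map_Fmor set3_Ften finite_classes_chain_obj)
  then show ?case by simp
qed

lemma metric_chain_obj:
  "Metric_space (car (chain_obj n)) (dst (chain_obj n))
     \<and> uniformly_discrete (car (chain_obj n)) (dst (chain_obj n)) (1 / 2 ^ n)"
proof (induction n)
  case 0
  have "Metric_space (car I0) (dst I0)" by (simp add: I0_def Metric_space_disc)
  moreover have "uniformly_discrete (car I0) (dst I0) 1"
    by (simp add: I0_def uniformly_discrete_def disc_def)
  ultimately show ?case by simp
next
  case (Suc n)
  then have ms: "Metric_space (car (chain_obj n)) (dst (chain_obj n))"
    and ud: "uniformly_discrete (car (chain_obj n)) (dst (chain_obj n)) (1 / 2 ^ n)" by simp_all
  have "(1 :: real) / 2 ^ n \<le> 1" by simp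
  then have "(1 :: real) / 2 ^ n \<le> 2" by linarith
  then show ?case
    using Metric_space_encS[OF finite_classes_chain_obj Metric_space_Ften[OF ms ud]]
      uniformly_discrete_encS[OF finite_classes_chain_obj uniformly_discrete_Ften[OF ms ud]]
    by (simp add: mult.commute)
qed

lemma mtop_chain_obj: "mtop (chain_obj n) = discrete_topology (car (chain_obj n))"
  unfolding mtop_def using metric_chain_obj[of n] by (intro mtopology_uniformly_discrete[of _ _ "1 / 2 ^ n"]) auto

section \<open>The colimit\<close>

lemma citer_add: "citer n (a + b) x = citer (n + a) b (citer n a x)"
  by (induction b) (auto simp: add.assoc)

lemma citer_agree_mono:
  assumes "n \<le> k" "m \<le> k" "k \<le> K" "citer n (k - n) x = citer m (k - m) y"
  shows "citer n (K - n) x = citer m (K - m) y"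
  using assms citer_add[of n "k - n" "K - k" x] citer_add[of m "k - m" "K - k" y] by simp

lemma citer_car: "x \<in> car (chain_obj n) \<Longrightarrow> citer n k x \<in> car (chain_obj (n + k))"
  by (induction k) (use set3_map_chain_map in \<open>auto simp: set3_map_def\<close>)

lemma citer_pts:
  "citer 0 k (Pt IT) = pT (chain_obj k)" "citer 0 k (Pt IL) = pL (chain_obj k)"
  "citer 0 k (Pt IR) = pR (chain_obj k)"
  by (induction k) (use set3_map_chain_map in \<open>auto simp: set3_map_def I0_def\<close>)

lemma cocone_citer:
  assumes "\<And>n x. x \<in> car (chain_obj n) \<Longrightarrow> h (Suc n) (chain_map n x) = h n x"
  shows "x \<in> car (chain_obj n) \<Longrightarrow> h (n + k) (citer n k x) = h n x"
  by (induction k) (auto simp: assms citer_car)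

lemma ceq_iff: "((n, x), (m, y)) \<in> ceq \<longleftrightarrow> (n, x) \<in> Sig \<and> (m, y) \<in> Sig
    \<and> (\<exists>k. n \<le> k \<and> m \<le> k \<and> citer n (k - n) x = citer m (k - m) y)"
  unfolding ceq_def by simp

lemma ceq_equiv: "equiv Sig ceq"
proof (rule equivI)
  show "refl_on Sig ceq" by (auto simp: refl_on_def ceq_def)
  show "sym ceq" by (auto simp: sym_def ceq_def)
  show "trans ceq"
  proof (rule transI, clarify)
    fix n x m y l z assume "((n, x), (m, y)) \<in> ceq" "((m, y), (l, z)) \<in> ceq"
    then obtain k1 k2 where "(n, x) \<in> Sig" "(l, z) \<in> Sig"
      "n \<le> k1" "m \<le> k1" "citer n (k1 - n) x = citer m (k1 - m) y"
      "m \<le> k2" "l \<le> k2" "citer m (k2 - m) y = citer l (k2 - l) z"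
      unfolding ceq_iff by blast
    then have "citer n (max k1 k2 - n) x = citer m (max k1 k2 - m) y"
      and "citer m (max k1 k2 - m) y = citer l (max k1 k2 - l) z"
      by (auto intro: citer_agree_mono)
    with \<open>(n, x) \<in> Sig\<close> \<open>(l, z) \<in> Sig\<close> \<open>n \<le> k1\<close> \<open>l \<le> k2\<close>
    show "((n, x), (l, z)) \<in> ceq"
      unfolding ceq_iff by (intro conjI exI[of _ "max k1 k2"]) auto
  qed
  show "ceq \<subseteq> Sig \<times> Sig" unfolding ceq_def by auto
qed

lemma cocone_ceq:
  assumes "\<And>n x. x \<in> car (chain_obj n) \<Longrightarrow> h (Suc n) (chain_map n x) = h n x"
    and "((n, x), (m, y)) \<in> ceq"
  shows "h n x = h m y"
proof -
  obtain k where k: "n \<le> k" "m \<le> k" "citer n (k - n) x = citer m (k - m) y"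
    and x: "x \<in> car (chain_obj n)" and y: "y \<in> car (chain_obj m)"
    using assms(2) unfolding ceq_iff Sig_def by auto
  have "h n x = h (n + (k - n)) (citer n (k - n) x)"
    by (rule cocone_citer[of h, OF assms(1) x, symmetric])
  also have "\<dots> = h (m + (k - m)) (citer m (k - m) y)"
    using k by simp
  also have "\<dots> = h m y"
    by (rule cocone_citer[of h, OF assms(1) y])
  finally show ?thesis .
qed

lemma gmap_in_Gset: "x \<in> car (chain_obj n) \<Longrightarrow> gmap n x \<in> Gset"
  unfolding gmap_def Gset_def by (rule quotientI) (simp add: Sig_def)

lemma Gset_cases:
  assumes "z \<in> Gset" obtains n x where "x \<in> car (chain_obj n)" "z = gmap n x"
  using assms unfolding Gset_def gmap_def by (auto elim!: quotientE simp: Sig_def)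

lemma gmap_eq_iff:
  "x \<in> car (chain_obj n) \<Longrightarrow> y \<in> car (chain_obj m) \<Longrightarrow> gmap n x = gmap m y \<longleftrightarrow> ((n, x), (m, y)) \<in> ceq"
  unfolding gmap_def by (rule eq_equiv_class_iff[OF ceq_equiv]) (simp_all add: Sig_def)

lemma gmap_citer: "x \<in> car (chain_obj n) \<Longrightarrow> gmap (n + k) (citer n k x) = gmap n x"
  by (subst gmap_eq_iff) (auto simp: citer_car ceq_iff Sig_def intro!: exI[of _ "n + k"])

lemma gmap_chain_map: "x \<in> car (chain_obj n) \<Longrightarrow> gmap (Suc n) (chain_map n x) = gmap n x"
  using gmap_citer[of x n 1] by simp

lemma gmap_pts:
  "gmap n (pT (chain_obj n)) = gmap 0 (Pt IT)" "gmap n (pL (chain_obj n)) = gmap 0 (Pt IL)"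
  "gmap n (pR (chain_obj n)) = gmap 0 (Pt IR)"
  using gmap_citer[of _ 0 n] by (simp_all add: citer_pts[symmetric] I0_def)

lemma gmap_pts_distinct:
  "gmap 0 (Pt IT) \<noteq> gmap 0 (Pt IL)" "gmap 0 (Pt IT) \<noteq> gmap 0 (Pt IR)" "gmap 0 (Pt IL) \<noteq> gmap 0 (Pt IR)"
proof -
  have "gmap 0 x = gmap 0 y \<longleftrightarrow> (\<exists>k. citer 0 k x = citer 0 k y)" if "x \<in> car I0" "y \<in> car I0" for x y
    using that by (subst gmap_eq_iff) (auto simp: ceq_iff Sig_def)
  then show "gmap 0 (Pt IT) \<noteq> gmap 0 (Pt IL)" "gmap 0 (Pt IT) \<noteq> gmap 0 (Pt IR)"
    "gmap 0 (Pt IL) \<noteq> gmap 0 (Pt IR)"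
    using set3_chain_obj unfolding set3_def by (auto simp: I0_def citer_pts)
qed

lemma cocone_factor:
  assumes "\<And>n x. x \<in> car (chain_obj n) \<Longrightarrow> h (Suc n) (chain_map n x) = h n x"
  shows "\<exists>u. \<forall>n. \<forall>x\<in>car (chain_obj n). u (gmap n x) = h n x"
proof (intro exI allI ballI)
  fix n x assume "x \<in> car (chain_obj n)"
  then have "(n, x) \<in> gmap n x"
    using ceq_equiv by (auto simp: gmap_def Sig_def equiv_def refl_on_def)
  then have "(SOME a. a \<in> gmap n x) \<in> gmap n x" by (rule someI)
  moreover obtain m y where my: "(SOME a. a \<in> gmap n x) = (m, y)" by fastforce
  ultimately have "((n, x), (m, y)) \<in> ceq" by (simp add: gmap_def)
  then show "case_prod h (SOME a. a \<in> gmap n x) = h n x"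
    using cocone_ceq[of h, OF assms] my by simp
qed

lemma tms3_G_rho: "tms3 G_rho"
  using gmap_in_Gset[of _ 0] gmap_pts_distinct
  by (simp add: tms3_def G_rho_def Metric_space_disc I0_def) (simp add: disc_def)

lemma mtop_G_rho: "mtop G_rho = discrete_topology Gset"
  unfolding mtop_def G_rho_def
  by (simp add: mtopology_uniformly_discrete[of _ _ 1] Metric_space_disc uniformly_discrete_def disc_def)

lemma topspace_mtop: "tms3 Y \<Longrightarrow> topspace (mtop Y) = car Y"
  by (simp add: tms3_def mtop_def Metric_space.topspace_mtopology)

lemma mor3_gmap: "mor3 (chain_obj n) G_rho (gmap n)"
  unfolding mor3_def mtop_chain_obj mtop_G_rho continuous_map_from_discrete_topology
  using gmap_in_Gset gmap_pts by (auto simp: G_rho_def)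

lemma G_rho_factor:
  assumes Y: "tms3 Y" and h: "\<And>n. mor3 (chain_obj n) Y (h n)"
    and compat: "\<And>n x. x \<in> car (chain_obj n) \<Longrightarrow> h (Suc n) (chain_map n x) = h n x"
  obtains u where "mor3 G_rho Y u" "\<And>n x. x \<in> car (chain_obj n) \<Longrightarrow> u (gmap n x) = h n x"
proof -
  obtain u where u: "\<And>n x. x \<in> car (chain_obj n) \<Longrightarrow> u (gmap n x) = h n x"
    using cocone_factor[of h, OF compat] by blast
  have "h n x \<in> car Y" if "x \<in> car (chain_obj n)" for n x
    using h[of n] that topspace_mtop[OF Y]
    by (auto simp: mor3_def mtop_chain_obj)
  then have "continuous_map (mtop G_rho) (mtop Y) u"
    unfolding mtop_G_rho continuous_map_from_discrete_topology topspace_mtop[OF Y]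
    by (auto elim!: Gset_cases simp: u)
  moreover have "u (pT G_rho) = pT Y" "u (pL G_rho) = pL Y" "u (pR G_rho) = pR Y"
    using u[of _ 0] h[of 0] by (auto simp: G_rho_def mor3_def I0_def)
  ultimately show thesis using that u by (simp add: mor3_def)
qed

theorem mainTheorem2:
  shows "tms3 G_rho
    \<and> (\<forall>n. mor3 (chain_obj n) G_rho (gmap n))
    \<and> (\<forall>n. \<forall>x\<in>car (chain_obj n). gmap (Suc n) (chain_map n x) = gmap n x)
    \<and> (\<forall>(Y :: 'y tmsp) h. tms3 Y
          \<and> (\<forall>n. mor3 (chain_obj n) Y (h n))
          \<and> (\<forall>n. \<forall>x\<in>car (chain_obj n). h (Suc n) (chain_map n x) = h n x)
        \<longrightarrow> (\<exists>u. mor3 G_rho Y u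
               \<and> (\<forall>n. \<forall>x\<in>car (chain_obj n). u (gmap n x) = h n x)
               \<and> (\<forall>u'. mor3 G_rho Y u'
                        \<and> (\<forall>n. \<forall>x\<in>car (chain_obj n). u' (gmap n x) = h n x)
                      \<longrightarrow> (\<forall>z\<in>car G_rho. u' z = u z))))"
proof (intro conjI allI impI ballI)
  show "tms3 G_rho" by (rule tms3_G_rho)
  show "mor3 (chain_obj n) G_rho (gmap n)" for n by (rule mor3_gmap)
  show "gmap (Suc n) (chain_map n x) = gmap n x" if "x \<in> car (chain_obj n)" for n x
    using that by (rule gmap_chain_map)
next
  fix Y :: "'y tmsp" and h
  assume "tms3 Y \<and> (\<forall>n. mor3 (chain_obj n) Y (h n))
    \<and> (\<forall>n. \<forall>x\<in>car (chain_obj n). h (Suc n) (chain_map n x) = h n x)"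
  then obtain u where "mor3 G_rho Y u" and "\<And>n x. x \<in> car (chain_obj n) \<Longrightarrow> u (gmap n x) = h n x"
    using G_rho_factor[of Y h] by blast
  then show "\<exists>u. mor3 G_rho Y u
      \<and> (\<forall>n. \<forall>x\<in>car (chain_obj n). u (gmap n x) = h n x)
      \<and> (\<forall>u'. mor3 G_rho Y u' \<and> (\<forall>n. \<forall>x\<in>car (chain_obj n). u' (gmap n x) = h n x)
            \<longrightarrow> (\<forall>z\<in>car G_rho. u' z = u z))"
    by (intro exI[of _ u]) (auto elim!: Gset_cases simp: G_rho_def)
qed

end
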